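(* Let $(V,P)$ be a finite, connected, lazy, reversible Markov chain equipped with the combinatorial distance $d$, and let $x\sim y$. The following are equivalent: (i) the edge $(x,y)$ has non-negative Ollivier sectional curvature; (ii) for all $f$ with $|f(u)-f(v)|\le d(u,v)$ for all $u,v$ and $f(y)-f(x)=1$, and all $\lambda\ge0$, \[ \frac{\Delta e^{\lambda f}(x)}{e^{\lambda f(x)}}\ge\frac{\Delta e^{\lambda f}(y)}{e^{\lambda f(y)}}\quad\text{and}\quad \frac{\Delta e^{-\lambda f}(x)}{e^{-\lambda f(x)}}\le\frac{\Delta e^{-\lambda f}(y)}{e^{-\lambda f(y)}}. \]
   Context: Lazy means $\sum_yP(x,y)=1$ and $P(x,x)\ge\frac12$ for all $x$; $P$ has symmetric support, and there is a probability $m$ with $m(x)P(x,y)=m(y)P(y,x)$. $x\sim y$ means $x\ne y$ and $P(x,y)>0$; the combinatorial distance is the minimal number of edges on a path. $\Delta f(x)=\sum_zP(x,z)(f(z)-f(x))$. The edge $x\sim y$ has non-negative Ollivier sectional curvature if there is a coupling $\pi:V\times V\to[0,\infty)$ of $P(x,\cdot)$ and $P(y,\cdot)$ (i.e. $\sum_{y'}\pi(x',y')=P(x,x')$, $\sum_{x'}\pi(x',y')=P(y,y')$) with $d(x',y')\le1$ whenever $\pi(x',y')>0$. *)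

theory Defs
  imports "HOL-Analysis.Analysis"
begin

definition lazy_reversible_chain :: "'a set \<Rightarrow> ('a \<Rightarrow> 'a \<Rightarrow> real) \<Rightarrow> bool" where
  "lazy_reversible_chain V P \<longleftrightarrow>
     finite V \<and> V \<noteq> {} \<and>
     (\<forall>x y. P x y \<ge> 0) \<and>
     (\<forall>x y. (x \<notin> V \<or> y \<notin> V) \<longrightarrow> P x y = 0) \<and>
     (\<forall>x\<in>V. (\<Sum>y\<in>V. P x y) = 1) \<and>
     (\<forall>x\<in>V. P x x \<ge> 1/2) \<and>
     (\<forall>x\<in>V. \<forall>y\<in>V. P x y > 0 \<longleftrightarrow> P y x > 0) \<and>
     (\<exists>m :: 'a \<Rightarrow> real. (\<forall>x\<in>V. m x \<ge> 0) \<and> (\<Sum>x\<in>V. m x) = 1 \<and>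
        (\<forall>x\<in>V. \<forall>y\<in>V. m x * P x y = m y * P y x))"

definition adj :: "'a set \<Rightarrow> ('a \<Rightarrow> 'a \<Rightarrow> real) \<Rightarrow> 'a \<Rightarrow> 'a \<Rightarrow> bool" where
  "adj V P x y \<longleftrightarrow> x \<in> V \<and> y \<in> V \<and> x \<noteq> y \<and> P x y > 0"

inductive has_path :: "'a set \<Rightarrow> ('a \<Rightarrow> 'a \<Rightarrow> real) \<Rightarrow> 'a \<Rightarrow> 'a \<Rightarrow> nat \<Rightarrow> bool"
  for V P where
  path_nil: "x \<in> V \<Longrightarrow> has_path V P x x 0"
| path_cons: "adj V P x z \<Longrightarrow> has_path V P z y n \<Longrightarrow> has_path V P x y (Suc n)"

definition chain_connected :: "'a set \<Rightarrow> ('a \<Rightarrow> 'a \<Rightarrow> real) \<Rightarrow> bool" where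
  "chain_connected V P \<longleftrightarrow> (\<forall>x\<in>V. \<forall>y\<in>V. \<exists>n. has_path V P x y n)"

definition comb_dist :: "'a set \<Rightarrow> ('a \<Rightarrow> 'a \<Rightarrow> real) \<Rightarrow> 'a \<Rightarrow> 'a \<Rightarrow> nat" where
  "comb_dist V P x y = (LEAST n. has_path V P x y n)"

definition laplacian :: "'a set \<Rightarrow> ('a \<Rightarrow> 'a \<Rightarrow> real) \<Rightarrow> ('a \<Rightarrow> real) \<Rightarrow> 'a \<Rightarrow> real" where
  "laplacian V P f x = (\<Sum>z\<in>V. P x z * (f z - f x))"

definition nonneg_sectional_curvature :: "'a set \<Rightarrow> ('a \<Rightarrow> 'a \<Rightarrow> real) \<Rightarrow> 'a \<Rightarrow> 'a \<Rightarrow> bool" where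
  "nonneg_sectional_curvature V P x y \<longleftrightarrow>
     (\<exists>\<pi> :: 'a \<Rightarrow> 'a \<Rightarrow> real.
        (\<forall>x' y'. \<pi> x' y' \<ge> 0) \<and>
        (\<forall>x' y'. (x' \<notin> V \<or> y' \<notin> V) \<longrightarrow> \<pi> x' y' = 0) \<and>
        (\<forall>x'\<in>V. (\<Sum>y'\<in>V. \<pi> x' y') = P x x') \<and>
        (\<forall>y'\<in>V. (\<Sum>x'\<in>V. \<pi> x' y') = P y y') \<and>
        (\<forall>x'\<in>V. \<forall>y'\<in>V. \<pi> x' y' > 0 \<longrightarrow> comb_dist V P x' y' \<le> 1))"

end

theory Submission
  imports Defs
begin

(*
  (i) implies (ii): if \<pi> couples P(x,.) and P(y,.) with d(x',y') \<le> 1 on its support, then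
  f(y') - f(y) \<le> f(x') - f(x) there, because f is 1-Lipschitz and f(y) - f(x) = 1. Hence the
  means \<Sum> P(x,x') exp(\<lambda>(f x' - f x)) and \<Sum> P(y,y') exp(\<lambda>(f y' - f y)), which are the two
  normalised Laplacians plus 1, compare termwise along \<pi> (and reversed for -\<lambda>).

  (ii) implies (i): by a Hall-type theorem for transport plans, if no such coupling exists there
  is a set A with P(x,A) > P(y,N(A)), N(A) being the closed 1-neighbourhood. The theorem is proved
  by minimising the squared excess of the column sums over all plans with the correct row sums:
  at a minimiser, mass in a column of maximal excess cannot be moved to any admissible column of
  smaller excess, so the rows feeding the columns of maximal excess form such a set A.
  If x \<notin> A, laziness forces y \<notin> N(A); the function equal to -1 on A \<inter> supp P(x,.), to 0 on the
  rest of its neighbourhood and to 1 elsewhere then violates the second inequality once \<lambda> is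
  large. If x \<in> A, the complement of N(A) is a violating set for the reversed edge (y,x), and
  the negated test function violates the first inequality.
*)

section \<open>Couplings and Hall's condition\<close>

definition coupling_on ::
  "'a set \<Rightarrow> ('a \<Rightarrow> 'a \<Rightarrow> bool) \<Rightarrow> ('a \<Rightarrow> real) \<Rightarrow> ('a \<Rightarrow> real) \<Rightarrow> ('a \<Rightarrow> 'a \<Rightarrow> real) \<Rightarrow> bool"
  where
  "coupling_on V R \<mu> \<nu> \<pi> \<longleftrightarrow>
     (\<forall>a b. 0 \<le> \<pi> a b) \<and> (\<forall>a b. (a \<notin> V \<or> b \<notin> V) \<longrightarrow> \<pi> a b = 0) \<and>
     (\<forall>a\<in>V. (\<Sum>b\<in>V. \<pi> a b) = \<mu> a) \<and> (\<forall>b\<in>V. (\<Sum>a\<in>V. \<pi> a b) = \<nu> b) \<and>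
     (\<forall>a\<in>V. \<forall>b\<in>V. 0 < \<pi> a b \<longrightarrow> R a b)"

definition nbhd :: "'a set \<Rightarrow> ('a \<Rightarrow> 'a \<Rightarrow> bool) \<Rightarrow> 'a set \<Rightarrow> 'a set" where
  "nbhd V R A = {w\<in>V. \<exists>a\<in>A. R a w}"

lemma coupling_on_converse:
  "coupling_on V R \<mu> \<nu> \<pi> \<Longrightarrow> coupling_on V (\<lambda>a b. R b a) \<nu> \<mu> (\<lambda>a b. \<pi> b a)"
  unfolding coupling_on_def by auto

lemma coupling_on_sum_le:
  assumes "coupling_on V R \<mu> \<nu> \<pi>"
    and "\<And>a b. a \<in> V \<Longrightarrow> b \<in> V \<Longrightarrow> R a b \<Longrightarrow> G a \<le> H b"
  shows "(\<Sum>a\<in>V. \<mu> a * G a) \<le> (\<Sum>b\<in>V. \<nu> b * H b)"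
proof -
  have nonneg: "\<And>a b. 0 \<le> \<pi> a b" and supp: "\<And>a b. a \<in> V \<Longrightarrow> b \<in> V \<Longrightarrow> 0 < \<pi> a b \<Longrightarrow> R a b"
    using assms(1) unfolding coupling_on_def by auto
  have "\<pi> a b * G a \<le> \<pi> a b * H b" if "a \<in> V" "b \<in> V" for a b
    using nonneg[of a b] supp[OF that] assms(2)[OF that]
    by (cases "\<pi> a b = 0") (auto intro: mult_left_mono)
  then have "(\<Sum>a\<in>V. \<Sum>b\<in>V. \<pi> a b * G a) \<le> (\<Sum>a\<in>V. \<Sum>b\<in>V. \<pi> a b * H b)"
    by (intro sum_mono) auto
  also have "\<dots> = (\<Sum>b\<in>V. \<Sum>a\<in>V. \<pi> a b * H b)"
    by (rule sum.swap)
  finally show ?thesis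
    using assms(1) unfolding coupling_on_def by (simp add: sum_distrib_right[symmetric])
qed

definition transport_plans :: "'a set \<Rightarrow> ('a \<Rightarrow> 'a \<Rightarrow> bool) \<Rightarrow> ('a \<Rightarrow> real) \<Rightarrow> ('a \<Rightarrow> 'a \<Rightarrow> real) set"
  where
  "transport_plans V R \<mu> = {\<pi>. (\<forall>a b. 0 \<le> \<pi> a b) \<and> (\<forall>a b. \<not> (a \<in> V \<and> b \<in> V \<and> R a b) \<longrightarrow> \<pi> a b = 0) \<and>
     (\<forall>a\<in>V. (\<Sum>b\<in>V. \<pi> a b) = \<mu> a)}"

definition column_excess :: "'a set \<Rightarrow> ('a \<Rightarrow> real) \<Rightarrow> ('a \<Rightarrow> 'a \<Rightarrow> real) \<Rightarrow> 'a \<Rightarrow> real" where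
  "column_excess V \<nu> \<pi> b = max ((\<Sum>a\<in>V. \<pi> a b) - \<nu> b) 0"

definition excess_energy :: "'a set \<Rightarrow> ('a \<Rightarrow> real) \<Rightarrow> ('a \<Rightarrow> 'a \<Rightarrow> real) \<Rightarrow> real" where
  "excess_energy V \<nu> \<pi> = (\<Sum>b\<in>V. (column_excess V \<nu> \<pi> b)\<^sup>2)"

lemma continuous_on_entry: "continuous_on UNIV (\<lambda>\<pi>::'a \<Rightarrow> 'b \<Rightarrow> real. \<pi> a b)"
  using continuous_on_compose2[of UNIV "\<lambda>g::'b \<Rightarrow> real. g b" UNIV "\<lambda>\<pi>. \<pi> a"] by auto

lemma continuous_on_excess_energy: "continuous_on UNIV (excess_energy V \<nu>)"
  unfolding excess_energy_def column_excess_def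
  by (intro continuous_on_sum continuous_on_power continuous_on_max continuous_on_diff
      continuous_on_const continuous_on_entry)

lemma closed_transport_plans: "closed (transport_plans V R \<mu>)"
proof -
  have "closed {\<pi>::'a \<Rightarrow> 'a \<Rightarrow> real. 0 \<le> \<pi> a b}" for a b
    by (rule closed_Collect_le[OF continuous_on_const continuous_on_entry])
  moreover have "closed {\<pi>::'a \<Rightarrow> 'a \<Rightarrow> real. \<not> (a \<in> V \<and> b \<in> V \<and> R a b) \<longrightarrow> \<pi> a b = 0}" for a b
    using closed_Collect_eq[OF continuous_on_entry continuous_on_const, of a b 0]
    by (cases "a \<in> V \<and> b \<in> V \<and> R a b") auto
  moreover have "closed {\<pi>::'a \<Rightarrow> 'a \<Rightarrow> real. a \<in> V \<longrightarrow> (\<Sum>b\<in>V. \<pi> a b) = \<mu> a}" for a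
  proof -
    have "continuous_on UNIV (\<lambda>\<pi>::'a \<Rightarrow> 'a \<Rightarrow> real. \<Sum>b\<in>V. \<pi> a b)"
      by (intro continuous_on_sum continuous_on_entry)
    from closed_Collect_eq[OF this continuous_on_const, of "\<mu> a"] show ?thesis
      by (cases "a \<in> V") auto
  qed
  ultimately show ?thesis
    unfolding transport_plans_def Ball_def
    by (intro closed_Collect_conj closed_Collect_all)
qed

lemma compact_transport_plans:
  assumes "finite V" and "\<And>a. a \<in> V \<Longrightarrow> 0 \<le> \<mu> a"
  shows "compact (transport_plans V R \<mu>)"
proof -
  define M where "M = sum \<mu> V"
  have compact_box: "compact (Pi\<^sub>E UNIV (\<lambda>_::'a. Pi\<^sub>E UNIV (\<lambda>_::'a. {0..M})))"
    using compactin_PiE[of "\<lambda>_. euclidean" UNIV "\<lambda>_::'a. {0..M}"]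
      compactin_PiE[of "\<lambda>_. euclidean" UNIV "\<lambda>_::'a. Pi\<^sub>E UNIV (\<lambda>_::'a. {0..M})"]
    by (simp add: euclidean_product_topology compactin_euclidean_iff)
  have "\<pi> a b \<le> M" if "\<pi> \<in> transport_plans V R \<mu>" for \<pi> a b
  proof (cases "a \<in> V \<and> b \<in> V \<and> R a b")
    case True
    then have "\<pi> a b \<le> (\<Sum>c\<in>V. \<pi> a c)"
      using that assms(1) by (intro member_le_sum) (auto simp: transport_plans_def)
    also have "\<dots> = \<mu> a"
      using that True by (simp add: transport_plans_def)
    also have "\<dots> \<le> M"
      unfolding M_def using True assms by (intro member_le_sum) auto
    finally show ?thesis .
  next
    case False
    then show ?thesis
      using that assms unfolding transport_plans_def M_def by (auto intro: sum_nonneg)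
  qed
  then have "transport_plans V R \<mu> \<subseteq> Pi\<^sub>E UNIV (\<lambda>_. Pi\<^sub>E UNIV (\<lambda>_. {0..M}))"
    by (auto simp: transport_plans_def)
  then show ?thesis
    by (metis compact_Int_closed[OF compact_box closed_transport_plans] inf.absorb2)
qed

lemma excess_minimizer_mono:
  assumes fin: "finite V" and plan: "\<pi> \<in> transport_plans V R \<mu>"
    and minimal: "\<And>\<pi>'. \<pi>' \<in> transport_plans V R \<mu> \<Longrightarrow> excess_energy V \<nu> \<pi> \<le> excess_energy V \<nu> \<pi>'"
    and V: "a \<in> V" "b \<in> V" "w \<in> V" and pos: "0 < \<pi> a b" and "R a w"
  shows "column_excess V \<nu> \<pi> b \<le> column_excess V \<nu> \<pi> w"
proof (rule ccontr)
  define g where "g = column_excess V \<nu> \<pi>"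
  assume "\<not> column_excess V \<nu> \<pi> b \<le> column_excess V \<nu> \<pi> w"
  then have gap: "g w < g b" and "b \<noteq> w"
    unfolding g_def by auto
  have g_nonneg: "0 \<le> column_excess V \<nu> \<pi>' c" for \<pi>' c
    by (simp add: column_excess_def)
  define e where "e = min (\<pi> a b) ((g b - g w) / 2)"
  define \<pi>' where "\<pi>' = (\<lambda>a' c. \<pi> a' c +
    (if a' = a then (if c = w then e else 0) - (if c = b then e else 0) else 0))"
  have e_pos: "0 < e" and e_le: "e \<le> \<pi> a b" "e \<le> (g b - g w) / 2"
    unfolding e_def using pos gap by (auto simp: min_def)
  have column_shift: "(\<Sum>a'\<in>V. \<pi>' a' c)
      = (\<Sum>a'\<in>V. \<pi> a' c) + (if c = w then e else 0) - (if c = b then e else 0)" for c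
    unfolding \<pi>'_def using fin V by (simp add: sum.distrib)
  have row_shift: "(\<Sum>c\<in>V. \<pi>' a' c) = (\<Sum>c\<in>V. \<pi> a' c)" for a'
    unfolding \<pi>'_def using fin V by (cases "a' = a") (simp_all add: sum.distrib sum_subtractf)
  have "R a b"
    using plan pos V unfolding transport_plans_def by force
  then have "\<forall>a' c. 0 \<le> \<pi>' a' c" "\<forall>a' c. \<not> (a' \<in> V \<and> c \<in> V \<and> R a' c) \<longrightarrow> \<pi>' a' c = 0"
    using plan V \<open>R a w\<close> e_pos e_le \<open>b \<noteq> w\<close>
    by (auto simp: transport_plans_def \<pi>'_def add_nonneg_nonneg)
  then have "\<pi>' \<in> transport_plans V R \<mu>"
    using plan row_shift unfolding transport_plans_def by simp
  then have energy_le: "excess_energy V \<nu> \<pi> \<le> excess_energy V \<nu> \<pi>'"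
    by (rule minimal)
  have unchanged: "column_excess V \<nu> \<pi>' c = g c" if "c \<noteq> b" "c \<noteq> w" for c
    using that unfolding g_def column_excess_def column_shift by simp
  have new_b: "column_excess V \<nu> \<pi>' b = g b - e"
    using e_pos e_le \<open>b \<noteq> w\<close> unfolding g_def column_excess_def column_shift
    by (auto simp: max_def split: if_splits)
  have "column_excess V \<nu> \<pi>' w \<le> g w + e"
    using e_pos \<open>b \<noteq> w\<close> unfolding g_def column_excess_def column_shift by auto
  then have new_w: "(column_excess V \<nu> \<pi>' w)\<^sup>2 \<le> (g w + e)\<^sup>2"
    using g_nonneg by (intro power_mono) auto
  have "excess_energy V \<nu> \<pi>' - excess_energy V \<nu> \<pi>
      = (column_excess V \<nu> \<pi>' b)\<^sup>2 - (g b)\<^sup>2 + ((column_excess V \<nu> \<pi>' w)\<^sup>2 - (g w)\<^sup>2)"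
    using fin V \<open>b \<noteq> w\<close> unchanged
    unfolding excess_energy_def g_def sum_subtractf[symmetric]
    by (subst sum.mono_neutral_right[of V "{b, w}"]) auto
  also have "\<dots> \<le> (g b - e)\<^sup>2 - (g b)\<^sup>2 + ((g w + e)\<^sup>2 - (g w)\<^sup>2)"
    using new_b new_w by simp
  also have "\<dots> = 2 * e * (e - (g b - g w))"
    by (simp add: power2_eq_square algebra_simps)
  also have "\<dots> < 0"
    using e_pos e_le by (intro mult_pos_neg) auto
  finally show False
    using energy_le by simp
qed

lemma coupling_if_no_excess:
  assumes fin: "finite V" and plan: "\<pi> \<in> transport_plans V R \<mu>" and mass: "sum \<mu> V = sum \<nu> V"
    and no_excess: "\<And>b. b \<in> V \<Longrightarrow> column_excess V \<nu> \<pi> b = 0"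
  shows "coupling_on V R \<mu> \<nu> \<pi>"
proof -
  have nonneg: "\<And>a b. 0 \<le> \<pi> a b"
    and supp: "\<And>a b. \<not> (a \<in> V \<and> b \<in> V \<and> R a b) \<Longrightarrow> \<pi> a b = 0"
    and rows: "\<And>a. a \<in> V \<Longrightarrow> (\<Sum>b\<in>V. \<pi> a b) = \<mu> a"
    using plan unfolding transport_plans_def by auto
  define col where "col b = (\<Sum>a\<in>V. \<pi> a b)" for b
  have "sum col V = sum \<nu> V"
    unfolding col_def using sum.swap[of \<pi> V V] rows mass by simp
  moreover have "col b \<le> \<nu> b" if "b \<in> V" for b
    using no_excess[OF that] unfolding column_excess_def col_def by (simp add: max_def split: if_splits)
  ultimately have "\<forall>b\<in>V. col b = \<nu> b"
    using fin by (metis sum_mono_inv)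
  then show ?thesis
    using nonneg supp rows unfolding coupling_on_def col_def by (metis less_irrefl)
qed

lemma hall_violation_if_excess_minimizer:
  assumes fin: "finite V" and \<nu>_nonneg: "\<And>b. b \<in> V \<Longrightarrow> 0 \<le> \<nu> b"
    and plan: "\<pi> \<in> transport_plans V R \<mu>"
    and minimal: "\<And>\<pi>'. \<pi>' \<in> transport_plans V R \<mu> \<Longrightarrow> excess_energy V \<nu> \<pi> \<le> excess_energy V \<nu> \<pi>'"
    and excess: "b\<^sub>0 \<in> V" "column_excess V \<nu> \<pi> b\<^sub>0 \<noteq> 0"
  shows "\<exists>A\<subseteq>V. sum \<nu> (nbhd V R A) < sum \<mu> A"
proof -
  have nonneg: "\<And>a b. 0 \<le> \<pi> a b" and rows: "\<And>a. a \<in> V \<Longrightarrow> (\<Sum>b\<in>V. \<pi> a b) = \<mu> a"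
    using plan unfolding transport_plans_def by auto
  define g where "g = column_excess V \<nu> \<pi>"
  define t where "t = Max (g ` V)"
  define T where "T = {b\<in>V. g b = t}"
  define A where "A = {a\<in>V. \<exists>b\<in>T. 0 < \<pi> a b}"
  have g_le: "g b \<le> t" if "b \<in> V" for b
    using fin that unfolding t_def by simp
  have "t \<in> g ` V"
    using fin excess unfolding t_def by (intro Max_in) auto
  then have "T \<noteq> {}"
    unfolding T_def by auto
  have "t > 0"
    using excess g_le[OF excess(1)] by (force simp: g_def column_excess_def)
  have "nbhd V R A \<subseteq> T"
  proof
    fix w assume "w \<in> nbhd V R A"
    then obtain a b where "a \<in> V" "b \<in> T" "0 < \<pi> a b" "w \<in> V" "R a w"
      unfolding nbhd_def A_def by auto
    then have "t \<le> g w"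
      using excess_minimizer_mono[OF fin plan minimal] unfolding T_def g_def by fastforce
    with g_le \<open>w \<in> V\<close> show "w \<in> T"
      unfolding T_def by force
  qed
  have "sum \<nu> (nbhd V R A) \<le> sum \<nu> T"
    using \<open>nbhd V R A \<subseteq> T\<close> fin \<nu>_nonneg by (intro sum_mono2) (auto simp: T_def)
  also have "\<dots> < sum \<nu> T + real (card T) * t"
    using \<open>T \<noteq> {}\<close> \<open>t > 0\<close> fin by (simp add: T_def card_gt_0_iff)
  also have "\<dots> = (\<Sum>b\<in>T. \<Sum>a\<in>V. \<pi> a b)"
  proof -
    have "(\<Sum>a\<in>V. \<pi> a b) = \<nu> b + t" if "b \<in> T" for b
      using that \<open>t > 0\<close> by (auto simp: T_def g_def column_excess_def max_def split: if_splits)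
    then show ?thesis
      by (simp add: sum.distrib)
  qed
  also have "\<dots> = (\<Sum>b\<in>T. \<Sum>a\<in>A. \<pi> a b)"
    unfolding A_def using fin nonneg
    by (intro sum.cong refl sum.mono_neutral_right) (auto simp: T_def less_le)
  also have "\<dots> = (\<Sum>a\<in>A. \<Sum>b\<in>T. \<pi> a b)"
    by (rule sum.swap)
  also have "\<dots> \<le> (\<Sum>a\<in>A. \<Sum>b\<in>V. \<pi> a b)"
    using fin nonneg by (intro sum_mono sum_mono2[OF fin]) (auto simp: T_def)
  also have "\<dots> = sum \<mu> A"
    using rows by (simp add: A_def)
  finally have "sum \<nu> (nbhd V R A) < sum \<mu> A" .
  moreover have "A \<subseteq> V"
    unfolding A_def by blast
  ultimately show ?thesis
    by blast
qed

lemma coupling_or_hall_violation: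
  assumes fin: "finite V" and \<mu>_nonneg: "\<And>a. a \<in> V \<Longrightarrow> 0 \<le> \<mu> a"
    and \<nu>_nonneg: "\<And>b. b \<in> V \<Longrightarrow> 0 \<le> \<nu> b"
    and mass: "sum \<mu> V = sum \<nu> V" and refl: "\<And>a. a \<in> V \<Longrightarrow> R a a"
  shows "(\<exists>\<pi>. coupling_on V R \<mu> \<nu> \<pi>) \<or> (\<exists>A\<subseteq>V. sum \<nu> (nbhd V R A) < sum \<mu> A)"
proof -
  define plans where "plans = transport_plans V R \<mu>"
  have "(\<lambda>a b. if a = b \<and> a \<in> V then \<mu> a else 0) \<in> plans"
    using fin \<mu>_nonneg refl by (auto simp: plans_def transport_plans_def)
  moreover have "compact plans"
    unfolding plans_def using fin \<mu>_nonneg by (rule compact_transport_plans)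
  ultimately obtain \<pi> where plan: "\<pi> \<in> plans"
    and minimal: "\<And>\<pi>'. \<pi>' \<in> plans \<Longrightarrow> excess_energy V \<nu> \<pi> \<le> excess_energy V \<nu> \<pi>'"
    using continuous_attains_inf[of plans "excess_energy V \<nu>"]
      continuous_on_subset[OF continuous_on_excess_energy subset_UNIV]
    by blast
  show ?thesis
  proof (cases "\<forall>b\<in>V. column_excess V \<nu> \<pi> b = 0")
    case True
    have "coupling_on V R \<mu> \<nu> \<pi>"
      by (rule coupling_if_no_excess[OF fin plan[unfolded plans_def] mass]) (use True in blast)
    then show ?thesis
      by blast
  next
    case False
    then obtain b\<^sub>0 where "b\<^sub>0 \<in> V" "column_excess V \<nu> \<pi> b\<^sub>0 \<noteq> 0"
      by blast
    then show ?thesis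
      using hall_violation_if_excess_minimizer[OF fin \<nu>_nonneg plan[unfolded plans_def]
          minimal[unfolded plans_def]]
      by blast
  qed
qed

lemma hall_violation_complement:
  fixes \<mu> \<nu> :: "'a \<Rightarrow> real"
  assumes fin: "finite V" and "A \<subseteq> V" and \<mu>_nonneg: "\<And>a. a \<in> V \<Longrightarrow> 0 \<le> \<mu> a"
    and mass: "sum \<mu> V = sum \<nu> V"
    and sym: "\<And>a b. a \<in> V \<Longrightarrow> b \<in> V \<Longrightarrow> R a b \<Longrightarrow> R b a"
    and violation: "sum \<nu> (nbhd V R A) < sum \<mu> A"
  shows "sum \<mu> (nbhd V R (V - nbhd V R A)) < sum \<nu> (V - nbhd V R A)"
proof -
  define B where "B = V - nbhd V R A"
  have "nbhd V R B \<inter> A = {}"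
    using sym \<open>A \<subseteq> V\<close> unfolding B_def nbhd_def by blast
  then have "sum \<mu> (nbhd V R B) + sum \<mu> A = sum \<mu> (nbhd V R B \<union> A)"
    using fin \<open>A \<subseteq> V\<close> by (intro sum.union_disjoint[symmetric]) (auto simp: nbhd_def intro: finite_subset)
  also have "\<dots> \<le> sum \<mu> V"
    using \<open>A \<subseteq> V\<close> \<mu>_nonneg by (intro sum_mono2[OF fin]) (auto simp: nbhd_def)
  also have "\<dots> = sum \<nu> B + sum \<nu> (nbhd V R A)"
    unfolding mass B_def using fin by (intro sum.subset_diff) (auto simp: nbhd_def)
  finally show ?thesis
    using violation unfolding B_def by linarith
qed

section \<open>The chain and its combinatorial distance\<close>

lemma lazy_reversible_chainD:
  assumes "lazy_reversible_chain V P"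
  shows "finite V" and "0 \<le> P a b" and "a \<in> V \<Longrightarrow> sum (P a) V = 1"
    and "a \<in> V \<Longrightarrow> 1/2 \<le> P a a" and "a \<in> V \<Longrightarrow> b \<in> V \<Longrightarrow> 0 < P a b \<Longrightarrow> 0 < P b a"
  using assms unfolding lazy_reversible_chain_def by blast+

lemma adj_sym:
  assumes "lazy_reversible_chain V P" "adj V P u v"
  shows "adj V P v u"
  using assms(2) lazy_reversible_chainD(5)[OF assms(1), of u v] unfolding adj_def by auto

lemma comb_dist_has_path:
  assumes "chain_connected V P" "u \<in> V" "v \<in> V"
  shows "has_path V P u v (comb_dist V P u v)"
proof -
  obtain n where "has_path V P u v n"
    using assms unfolding chain_connected_def by blast
  then show ?thesis
    unfolding comb_dist_def by (rule LeastI)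
qed

lemma comb_dist_eq_0_iff:
  assumes "chain_connected V P" "u \<in> V" "v \<in> V"
  shows "comb_dist V P u v = 0 \<longleftrightarrow> u = v"
  using comb_dist_has_path[OF assms] has_path.path_nil[OF \<open>u \<in> V\<close>]
  by (auto simp: comb_dist_def elim: has_path.cases)

abbreviation near :: "'a set \<Rightarrow> ('a \<Rightarrow> 'a \<Rightarrow> real) \<Rightarrow> 'a \<Rightarrow> 'a \<Rightarrow> bool" where
  "near V P u v \<equiv> comb_dist V P u v \<le> 1"

lemma near_iff_eq_or_adj:
  assumes "chain_connected V P" "u \<in> V" "v \<in> V"
  shows "near V P u v \<longleftrightarrow> u = v \<or> adj V P u v"
proof
  assume "near V P u v"
  then consider "comb_dist V P u v = 0" | "comb_dist V P u v = Suc 0"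
    by linarith
  then show "u = v \<or> adj V P u v"
  proof cases
    case 1
    then show ?thesis
      using comb_dist_eq_0_iff[OF assms] by simp
  next
    case 2
    then have "has_path V P u v (Suc 0)"
      using comb_dist_has_path[OF assms] by simp
    then obtain z where "adj V P u z" "has_path V P z v 0"
      by (cases rule: has_path.cases) auto
    moreover from this(2) have "z = v"
      by (cases rule: has_path.cases) auto
    ultimately show ?thesis
      by simp
  qed
next
  assume "u = v \<or> adj V P u v"
  then show "near V P u v"
  proof
    assume "u = v"
    then show ?thesis
      using comb_dist_eq_0_iff[OF assms] by simp
  next
    assume "adj V P u v"
    then have "has_path V P u v (Suc 0)"
      by (rule has_path.path_cons[OF _ has_path.path_nil[OF \<open>v \<in> V\<close>]])
    then have "(LEAST n. has_path V P u v n) \<le> Suc 0"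
      by (rule Least_le)
    then show ?thesis
      by (simp add: comb_dist_def)
  qed
qed

lemma near_refl:
  assumes "chain_connected V P" "u \<in> V"
  shows "near V P u u"
  using comb_dist_eq_0_iff[OF assms assms(2)] by simp

lemma near_sym:
  assumes "lazy_reversible_chain V P" "chain_connected V P" "u \<in> V" "v \<in> V" "near V P u v"
  shows "near V P v u"
proof -
  have "u = v \<or> adj V P u v"
    using assms(5) near_iff_eq_or_adj[OF assms(2-4)] by simp
  then show ?thesis
    using adj_sym[OF assms(1)] near_iff_eq_or_adj[OF assms(2,4,3)] by auto
qed

lemma near_if_pos:
  assumes "chain_connected V P" "u \<in> V" "v \<in> V" "0 < P u v"
  shows "near V P u v"
  using assms near_iff_eq_or_adj[OF assms(1-3)] unfolding adj_def by auto

lemma nonneg_sectional_curvature_iff_coupling: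
  "nonneg_sectional_curvature V P x y \<longleftrightarrow> (\<exists>\<pi>. coupling_on V (near V P) (P x) (P y) \<pi>)"
  unfolding nonneg_sectional_curvature_def coupling_on_def by simp

section \<open>Exponential test functions\<close>

definition comb_lipschitz :: "'a set \<Rightarrow> ('a \<Rightarrow> 'a \<Rightarrow> real) \<Rightarrow> ('a \<Rightarrow> real) \<Rightarrow> bool" where
  "comb_lipschitz V P f \<longleftrightarrow> (\<forall>u\<in>V. \<forall>v\<in>V. \<bar>f u - f v\<bar> \<le> real (comb_dist V P u v))"

lemma comb_lipschitz_uminus: "comb_lipschitz V P f \<Longrightarrow> comb_lipschitz V P (\<lambda>z. - f z)"
  unfolding comb_lipschitz_def by (simp add: abs_minus_commute)

definition test_level :: "'a set \<Rightarrow> ('a \<Rightarrow> 'a \<Rightarrow> real) \<Rightarrow> 'a set \<Rightarrow> 'a \<Rightarrow> real" where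
  "test_level V P L z = (if z \<in> L then -1 else if z \<in> nbhd V (near V P) L then 0 else 1)"

lemma comb_lipschitz_test_level:
  assumes chain: "lazy_reversible_chain V P" and conn: "chain_connected V P"
  shows "comb_lipschitz V P (test_level V P L)"
  unfolding comb_lipschitz_def
proof (intro ballI)
  fix u v assume "u \<in> V" "v \<in> V"
  show "\<bar>test_level V P L u - test_level V P L v\<bar> \<le> real (comb_dist V P u v)"
  proof (cases "near V P u v")
    case False
    then show ?thesis
      by (auto simp: test_level_def)
  next
    case True
    have "near V P v u"
      using near_sym[OF chain conn \<open>u \<in> V\<close> \<open>v \<in> V\<close> True] .
    then have "\<bar>test_level V P L u - test_level V P L v\<bar> \<le> 1"
      using True \<open>u \<in> V\<close> \<open>v \<in> V\<close> by (auto simp: test_level_def nbhd_def)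
    moreover have "u \<noteq> v \<Longrightarrow> comb_dist V P u v = 1"
      using True comb_dist_eq_0_iff[OF conn \<open>u \<in> V\<close> \<open>v \<in> V\<close>] by linarith
    ultimately show ?thesis
      by (cases "u = v") auto
  qed
qed

lemma laplacian_exp_ratio:
  assumes "finite V" and "sum (P a) V = 1"
  shows "laplacian V P (\<lambda>z. exp (h z)) a / exp (h a) = (\<Sum>z\<in>V. P a z * exp (h z - h a)) - 1"
proof -
  have "laplacian V P (\<lambda>z. exp (h z)) a / exp (h a) = (\<Sum>z\<in>V. P a z * exp (h z - h a) - P a z)"
    unfolding laplacian_def sum_divide_distrib by (intro sum.cong) (simp_all add: exp_diff field_simps)
  then show ?thesis
    using assms(2) by (simp add: sum_subtractf)
qed

lemma sum_exp_ge_level_set: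
  fixes p h :: "'a \<Rightarrow> real"
  assumes "finite V" "S \<subseteq> V" "\<And>z. z \<in> V \<Longrightarrow> 0 \<le> p z" "\<And>z. z \<in> S \<Longrightarrow> h z = c"
  shows "exp c * sum p S \<le> (\<Sum>z\<in>V. p z * exp (h z))"
proof -
  have "exp c * sum p S = (\<Sum>z\<in>S. p z * exp (h z))"
    using assms(4) by (simp add: sum_distrib_left mult.commute)
  also have "\<dots> \<le> (\<Sum>z\<in>V. p z * exp (h z))"
    using assms(1-3) by (intro sum_mono2) auto
  finally show ?thesis .
qed

lemma sum_exp_le_level_set:
  fixes p h :: "'a \<Rightarrow> real"
  assumes "finite V" "N \<subseteq> V" "\<And>z. z \<in> V \<Longrightarrow> 0 \<le> p z"
    and "\<And>z. z \<in> V \<Longrightarrow> 0 < p z \<Longrightarrow> h z \<le> (if z \<in> N then c else 0)"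
  shows "(\<Sum>z\<in>V. p z * exp (h z)) \<le> exp c * sum p N + sum p V"
proof -
  have "p z * exp (h z) \<le> (if z \<in> N then p z * exp c else 0) + p z" if "z \<in> V" for z
  proof (cases "p z = 0")
    case False
    then have "exp (h z) \<le> (if z \<in> N then exp c else 1)"
      using assms(3,4)[OF that] by auto
    then have "p z * exp (h z) \<le> p z * (if z \<in> N then exp c else 1)"
      using assms(3)[OF that] by (rule mult_left_mono)
    then show ?thesis
      using assms(3)[OF that] by (auto split: if_splits)
  qed simp
  then have "(\<Sum>z\<in>V. p z * exp (h z)) \<le> (\<Sum>z\<in>V. (if z \<in> N then p z * exp c else 0) + p z)"
    by (rule sum_mono)
  also have "\<dots> = exp c * sum p N + sum p V"
    using assms(1,2)
    by (simp add: sum.distrib sum.If_cases Int_absorb1 sum_distrib_left mult.commute)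
  finally show ?thesis .
qed

lemma lazy_mass_outside_le_half:
  assumes chain: "lazy_reversible_chain V P" and "x \<in> V" "A \<subseteq> V" "x \<notin> A"
  shows "sum (P x) A \<le> 1/2"
proof -
  note fin = lazy_reversible_chainD(1)[OF chain]
  have "sum (P x) A \<le> sum (P x) (V - {x})"
    using fin lazy_reversible_chainD(2)[OF chain] assms(3,4) by (intro sum_mono2) auto
  also have "\<dots> = 1 - P x x"
    using fin \<open>x \<in> V\<close> lazy_reversible_chainD(3)[OF chain] by (simp add: sum_diff1)
  finally show ?thesis
    using lazy_reversible_chainD(4)[OF chain \<open>x \<in> V\<close>] by linarith
qed

lemma lazy_violation_target_not_in_nbhd:
  assumes chain: "lazy_reversible_chain V P" and "x \<in> V" "y \<in> V" "A \<subseteq> V" "x \<notin> A"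
    and violation: "sum (P y) (nbhd V R A) < sum (P x) A"
  shows "y \<notin> nbhd V R A"
proof
  assume "y \<in> nbhd V R A"
  then have "P y y \<le> sum (P y) (nbhd V R A)"
    using lazy_reversible_chainD(1,2)[OF chain]
    by (intro member_le_sum) (auto simp: nbhd_def intro: finite_subset)
  then show False
    using violation lazy_mass_outside_le_half[OF chain \<open>x \<in> V\<close> \<open>A \<subseteq> V\<close> \<open>x \<notin> A\<close>]
      lazy_reversible_chainD(4)[OF chain \<open>y \<in> V\<close>]
    by linarith
qed

lemma test_level_exp_sums:
  assumes chain: "lazy_reversible_chain V P" and conn: "chain_connected V P" and "L \<subseteq> V"
    and "x \<in> nbhd V (near V P) L" "x \<notin> L" and "y \<in> V" "y \<notin> nbhd V (near V P) L"
  defines "f \<equiv> test_level V P L"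
  shows "exp t * sum (P x) L \<le> (\<Sum>z\<in>V. P x z * exp (- t * f z - - t * f x))"
    and "(\<Sum>z\<in>V. P y z * exp (- t * f z - - t * f y)) \<le> exp t * sum (P y) (nbhd V (near V P) L) + 1"
proof -
  note fin = lazy_reversible_chainD(1)[OF chain]
    and P_nonneg = lazy_reversible_chainD(2)[OF chain]
  have "nbhd V (near V P) L \<subseteq> V"
    by (auto simp: nbhd_def)
  have "f x = 0"
    using assms(4,5) by (simp add: f_def test_level_def)
  then show "exp t * sum (P x) L \<le> (\<Sum>z\<in>V. P x z * exp (- t * f z - - t * f x))"
    by (intro sum_exp_ge_level_set[OF fin \<open>L \<subseteq> V\<close> P_nonneg]) (simp add: f_def test_level_def)
  have "y \<notin> L"
    using assms(6,7) near_refl[OF conn \<open>y \<in> V\<close>] by (auto simp: nbhd_def)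
  with assms(7) have "f y = 1"
    by (simp add: f_def test_level_def)
  have "(\<Sum>z\<in>V. P y z * exp (- t * f z - - t * f y)) \<le> exp t * sum (P y) (nbhd V (near V P) L) + sum (P y) V"
  proof (rule sum_exp_le_level_set[OF fin \<open>nbhd V (near V P) L \<subseteq> V\<close> P_nonneg])
    fix z assume "z \<in> V" "0 < P y z"
    then have "z \<notin> L"
      using assms(7) near_sym[OF chain conn] near_if_pos[OF conn] \<open>y \<in> V\<close> \<open>L \<subseteq> V\<close>
      by (auto simp: nbhd_def)
    then show "- t * f z - - t * f y \<le> (if z \<in> nbhd V (near V P) L then t else 0)"
      using \<open>f y = 1\<close> by (simp add: f_def test_level_def)
  qed
  then show "(\<Sum>z\<in>V. P y z * exp (- t * f z - - t * f y)) \<le> exp t * sum (P y) (nbhd V (near V P) L) + 1"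
    using lazy_reversible_chainD(3)[OF chain \<open>y \<in> V\<close>] by simp
qed

lemma hall_violation_exp_ratio:
  assumes chain: "lazy_reversible_chain V P" and conn: "chain_connected V P" and "adj V P x y"
    and "A \<subseteq> V" "x \<notin> A" and violation: "sum (P y) (nbhd V (near V P) A) < sum (P x) A"
  obtains f t where "comb_lipschitz V P f" "f y - f x = 1" "0 \<le> t"
    "laplacian V P (\<lambda>z. exp (- t * f z)) y / exp (- t * f y)
       < laplacian V P (\<lambda>z. exp (- t * f z)) x / exp (- t * f x)"
proof -
  note fin = lazy_reversible_chainD(1)[OF chain]
    and P_nonneg = lazy_reversible_chainD(2)[OF chain]
  have "x \<in> V" "y \<in> V"
    using \<open>adj V P x y\<close> by (auto simp: adj_def)
  have "y \<notin> nbhd V (near V P) A"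
    by (rule lazy_violation_target_not_in_nbhd[OF chain \<open>x \<in> V\<close> \<open>y \<in> V\<close> \<open>A \<subseteq> V\<close> \<open>x \<notin> A\<close> violation])
  define L where "L = {a\<in>A. 0 < P x a}"
  define N where "N = nbhd V (near V P) L"
  define f where "f = test_level V P L"
  define d where "d = sum (P x) L - sum (P y) N"
  define t where "t = 1 / d"
  have "L \<subseteq> V" and "N \<subseteq> nbhd V (near V P) A"
    using \<open>A \<subseteq> V\<close> by (auto simp: L_def N_def nbhd_def)
  have "sum (P x) L = sum (P x) A"
    using fin \<open>A \<subseteq> V\<close> P_nonneg[of x] unfolding L_def
    by (intro sum.mono_neutral_left) (auto intro: finite_subset simp: less_le)
  moreover have "sum (P y) N \<le> sum (P y) (nbhd V (near V P) A)"
    using fin P_nonneg \<open>N \<subseteq> nbhd V (near V P) A\<close> by (intro sum_mono2) (auto simp: nbhd_def)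
  ultimately have "0 < d"
    using violation unfolding d_def by linarith
  then obtain l where "l \<in> L"
    using P_nonneg sum_nonneg[of N "P y"] by (force simp: d_def)
  then have "near V P l x"
    using near_sym[OF chain conn] near_if_pos[OF conn] \<open>x \<in> V\<close> \<open>L \<subseteq> V\<close>
    by (auto simp: L_def)
  with \<open>l \<in> L\<close> \<open>x \<in> V\<close> have "x \<in> N"
    by (auto simp: N_def nbhd_def)
  have "x \<notin> L" "y \<notin> N"
    using \<open>x \<notin> A\<close> \<open>y \<notin> nbhd V (near V P) A\<close> \<open>N \<subseteq> nbhd V (near V P) A\<close> by (auto simp: L_def)
  have "1 < (1 + t) * d"
    using \<open>0 < d\<close> by (simp add: t_def field_simps)
  also have "\<dots> \<le> exp t * d"
    using \<open>0 < d\<close> exp_ge_add_one_self[of t] by simp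
  finally have "(\<Sum>z\<in>V. P y z * exp (- t * f z - - t * f y))
      < (\<Sum>z\<in>V. P x z * exp (- t * f z - - t * f x))"
    using test_level_exp_sums[OF chain conn \<open>L \<subseteq> V\<close>, of x y t] \<open>x \<in> N\<close> \<open>x \<notin> L\<close> \<open>y \<in> V\<close> \<open>y \<notin> N\<close>
    unfolding N_def f_def d_def by (simp add: algebra_simps)
  then have "laplacian V P (\<lambda>z. exp (- t * f z)) y / exp (- t * f y)
      < laplacian V P (\<lambda>z. exp (- t * f z)) x / exp (- t * f x)"
    using laplacian_exp_ratio[where h = "\<lambda>z. - t * f z", OF fin lazy_reversible_chainD(3)[OF chain]]
      \<open>x \<in> V\<close> \<open>y \<in> V\<close>
    by simp
  moreover have "f y - f x = 1"
    using \<open>x \<in> N\<close> \<open>x \<notin> L\<close> \<open>y \<notin> N\<close> \<open>y \<in> V\<close> near_refl[OF conn \<open>y \<in> V\<close>]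
    by (auto simp: f_def test_level_def N_def nbhd_def)
  moreover have "0 \<le> t"
    using \<open>0 < d\<close> by (simp add: t_def)
  moreover have "comb_lipschitz V P f"
    unfolding f_def by (rule comb_lipschitz_test_level[OF chain conn])
  ultimately show thesis
    using that by blast
qed

lemma hall_violation_reverse:
  assumes chain: "lazy_reversible_chain V P" and conn: "chain_connected V P" and "adj V P x y"
    and "A \<subseteq> V" "x \<in> A" and violation: "sum (P y) (nbhd V (near V P) A) < sum (P x) A"
  obtains B where "B \<subseteq> V" "y \<notin> B" "sum (P x) (nbhd V (near V P) B) < sum (P y) B"
proof
  have "x \<in> V" "y \<in> V"
    using \<open>adj V P x y\<close> by (auto simp: adj_def)
  show "y \<notin> V - nbhd V (near V P) A"
    using \<open>x \<in> A\<close> \<open>adj V P x y\<close> \<open>y \<in> V\<close> near_iff_eq_or_adj[OF conn \<open>x \<in> V\<close> \<open>y \<in> V\<close>]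
    by (auto simp: nbhd_def)
  show "sum (P x) (nbhd V (near V P) (V - nbhd V (near V P) A)) < sum (P y) (V - nbhd V (near V P) A)"
    using lazy_reversible_chainD[OF chain] \<open>x \<in> V\<close> \<open>y \<in> V\<close> near_sym[OF chain conn]
    by (intro hall_violation_complement[OF _ \<open>A \<subseteq> V\<close> _ _ _ violation]) auto
qed simp

section \<open>The two implications\<close>

lemma nonneg_curvature_exp_ratio_le:
  assumes chain: "lazy_reversible_chain V P" and "x \<in> V" "y \<in> V"
    and curvature: "nonneg_sectional_curvature V P x y"
    and lip: "comb_lipschitz V P f" and "f y - f x = 1" and "0 \<le> t"
  shows "laplacian V P (\<lambda>z. exp (t * f z)) y / exp (t * f y)
           \<le> laplacian V P (\<lambda>z. exp (t * f z)) x / exp (t * f x)"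
    and "laplacian V P (\<lambda>z. exp (- t * f z)) x / exp (- t * f x)
           \<le> laplacian V P (\<lambda>z. exp (- t * f z)) y / exp (- t * f y)"
proof -
  note fin = lazy_reversible_chainD(1)[OF chain]
  obtain \<pi> where coupling: "coupling_on V (near V P) (P x) (P y) \<pi>"
    using curvature unfolding nonneg_sectional_curvature_iff_coupling by blast
  have shift: "t * (f b - f y) \<le> t * (f a - f x)" if "a \<in> V" "b \<in> V" "near V P a b" for a b
  proof -
    have "\<bar>f a - f b\<bar> \<le> 1"
      using lip that unfolding comb_lipschitz_def by force
    then show ?thesis
      using \<open>f y - f x = 1\<close> \<open>0 \<le> t\<close> by (intro mult_left_mono) auto
  qed
  have "(\<Sum>b\<in>V. P y b * exp (t * f b - t * f y)) \<le> (\<Sum>a\<in>V. P x a * exp (t * f a - t * f x))"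
    using shift by (intro coupling_on_sum_le[OF coupling_on_converse[OF coupling]])
      (simp add: right_diff_distrib)
  moreover have "(\<Sum>a\<in>V. P x a * exp (- t * f a - - t * f x)) \<le> (\<Sum>b\<in>V. P y b * exp (- t * f b - - t * f y))"
    using shift by (intro coupling_on_sum_le[OF coupling]) (simp add: algebra_simps)
  ultimately show "laplacian V P (\<lambda>z. exp (t * f z)) y / exp (t * f y)
           \<le> laplacian V P (\<lambda>z. exp (t * f z)) x / exp (t * f x)"
    and "laplacian V P (\<lambda>z. exp (- t * f z)) x / exp (- t * f x)
           \<le> laplacian V P (\<lambda>z. exp (- t * f z)) y / exp (- t * f y)"
    using laplacian_exp_ratio[where h = "\<lambda>z. t * f z", OF fin lazy_reversible_chainD(3)[OF chain]]
      laplacian_exp_ratio[where h = "\<lambda>z. - t * f z", OF fin lazy_reversible_chainD(3)[OF chain]]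
      \<open>x \<in> V\<close> \<open>y \<in> V\<close>
    by simp_all
qed

lemma exp_ratio_le_imp_nonneg_curvature:
  assumes chain: "lazy_reversible_chain V P" and conn: "chain_connected V P" and "adj V P x y"
    and up: "\<And>f t. comb_lipschitz V P f \<Longrightarrow> f y - f x = 1 \<Longrightarrow> 0 \<le> t \<Longrightarrow>
      laplacian V P (\<lambda>z. exp (t * f z)) y / exp (t * f y)
        \<le> laplacian V P (\<lambda>z. exp (t * f z)) x / exp (t * f x)"
    and down: "\<And>f t. comb_lipschitz V P f \<Longrightarrow> f y - f x = 1 \<Longrightarrow> 0 \<le> t \<Longrightarrow>
      laplacian V P (\<lambda>z. exp (- t * f z)) x / exp (- t * f x)
        \<le> laplacian V P (\<lambda>z. exp (- t * f z)) y / exp (- t * f y)"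
  shows "nonneg_sectional_curvature V P x y"
proof (rule ccontr)
  assume no_coupling: "\<not> nonneg_sectional_curvature V P x y"
  have "x \<in> V" "y \<in> V"
    using \<open>adj V P x y\<close> by (auto simp: adj_def)
  have "(\<exists>\<pi>. coupling_on V (near V P) (P x) (P y) \<pi>)
      \<or> (\<exists>A\<subseteq>V. sum (P y) (nbhd V (near V P) A) < sum (P x) A)"
    by (rule coupling_or_hall_violation)
      (use lazy_reversible_chainD[OF chain] \<open>x \<in> V\<close> \<open>y \<in> V\<close> near_refl[OF conn] in auto)
  then obtain A where "A \<subseteq> V" and violation: "sum (P y) (nbhd V (near V P) A) < sum (P x) A"
    using no_coupling unfolding nonneg_sectional_curvature_iff_coupling by blast
  show False
  proof (cases "x \<in> A")
    case False
    obtain f t where "comb_lipschitz V P f" "f y - f x = 1" "0 \<le> t"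
      "laplacian V P (\<lambda>z. exp (- t * f z)) y / exp (- t * f y)
         < laplacian V P (\<lambda>z. exp (- t * f z)) x / exp (- t * f x)"
      using hall_violation_exp_ratio[OF chain conn \<open>adj V P x y\<close> \<open>A \<subseteq> V\<close> False violation] .
    then show False
      using down by fastforce
  next
    case True
    then obtain B where "B \<subseteq> V" "y \<notin> B" "sum (P x) (nbhd V (near V P) B) < sum (P y) B"
      using hall_violation_reverse[OF chain conn \<open>adj V P x y\<close> \<open>A \<subseteq> V\<close> _ violation] by blast
    then obtain g t where "comb_lipschitz V P g" "g x - g y = 1" "0 \<le> t"
      "laplacian V P (\<lambda>z. exp (- t * g z)) x / exp (- t * g x)
         < laplacian V P (\<lambda>z. exp (- t * g z)) y / exp (- t * g y)"
      using hall_violation_exp_ratio[OF chain conn adj_sym[OF chain \<open>adj V P x y\<close>] \<open>B \<subseteq> V\<close> \<open>y \<notin> B\<close>]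
      by blast
    then show False
      using up[of "\<lambda>z. - g z" t] comb_lipschitz_uminus by fastforce
  qed
qed

theorem theorem4p3:
  fixes V :: "'a set" and P :: "'a \<Rightarrow> 'a \<Rightarrow> real" and x y :: 'a
  assumes "lazy_reversible_chain V P"
    and "chain_connected V P"
    and "adj V P x y"
  shows "nonneg_sectional_curvature V P x y \<longleftrightarrow>
    (\<forall>f :: 'a \<Rightarrow> real. \<forall>t :: real.
       ((\<forall>u\<in>V. \<forall>v\<in>V. \<bar>f u - f v\<bar> \<le> real (comb_dist V P u v)) \<and> f y - f x = 1 \<and> t \<ge> 0)
       \<longrightarrow> laplacian V P (\<lambda>z. exp (t * f z)) x / exp (t * f x)
             \<ge> laplacian V P (\<lambda>z. exp (t * f z)) y / exp (t * f y)
         \<and> laplacian V P (\<lambda>z. exp (- t * f z)) x / exp (- t * f x)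
             \<le> laplacian V P (\<lambda>z. exp (- t * f z)) y / exp (- t * f y))"
proof -
  have "x \<in> V" "y \<in> V"
    using assms(3) by (auto simp: adj_def)
  then show ?thesis
    using nonneg_curvature_exp_ratio_le[OF assms(1)]
      exp_ratio_le_imp_nonneg_curvature[OF assms]
    unfolding comb_lipschitz_def by blast
qed

end
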